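(* For every $N\ge3$ and every choice of settings $X_j,X_j'$ ($j=1,\dots,N$), $|\langle I^N_{CHSH}\rangle|\le 2\sqrt2$. Moreover, if the settings satisfy (ND) and $\langle I^N_{CHSH}\rangle=\pm2\sqrt2$, then $\langle I^2_{CHSH}\rangle=\langle I^N_{CHSH}\rangle$.
   Context: $|G\rangle=\frac{1}{\sqrt2}(|0\cdots0\rangle+|1\cdots1\rangle)$ ($N$ qubits), $|\psi_+\rangle=\frac1{\sqrt2}(|00\rangle+|11\rangle)$, $\vec\sigma=(\sigma_x,\sigma_y,\sigma_z)$ Pauli matrices. For $j=1,\dots,N$: $X_j=\vec n_j\cdot\vec\sigma$, $X_j'=\vec n_j'\cdot\vec\sigma$ with $\vec n_j=(\sin\alpha_j\cos\varphi_j,\sin\alpha_j\sin\varphi_j,\cos\alpha_j)$, $\vec n_j'=(\sin\alpha_j'\cos\varphi_j',\sin\alpha_j'\sin\varphi_j',\cos\alpha_j')$, $\alpha_j,\alpha_j'\in[0,\pi]$. $\mathbb A_0=\bigotimes_{j=1}^{N-1}X_j$, $\mathbb A_1=\bigotimes_{j=1}^{N-1}X_j'$, $\mathbb B_0=X_N$, $\mathbb B_1=X_N'$, and $\langle I^N_{CHSH}\rangle=\sum_{a,b\in\{0,1\}}(-1)^{ab}\langle G|\mathbb A_a\otimes\mathbb B_b|G\rangle$. (ND): $D:=(\prod_{j=1}^{N-1}\cos\alpha_j)^2+(\prod_{j=1}^{N-1}\sin\alpha_j)^2\neq0$, $D':=(\prod_{j=1}^{N-1}\cos\alpha_j')^2+(\prod_{j=1}^{N-1}\sin\alpha_j')^2\neq0$,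 and if $N$ is odd, $\sin\alpha_N\neq0\neq\sin\alpha_N'$. Under (ND): $\varepsilon=D^{-1/2}$, $\varepsilon'=D'^{-1/2}$; $A_0=\vec{\mathrm n}_0\cdot\vec\sigma$, $\vec{\mathrm n}_0=\varepsilon(\prod_{j<N}\sin\alpha_j\cos\beta,\prod_{j<N}\sin\alpha_j\sin\beta,\prod_{j<N}\cos\alpha_j)$, $\beta=\sum_{j=1}^{N-1}\varphi_j$; $A_1$ likewise from primed parameters with $\varepsilon'$. If $N$ even, $B_0=X_N,B_1=X_N'$; if $N$ odd, $B_0=\cos\varphi_N\sigma_x+\sin\varphi_N\sigma_y$, $B_1=\cos\varphi_N'\sigma_x+\sin\varphi_N'\sigma_y$. $\langle I^2_{CHSH}\rangle=\sum_{a,b}(-1)^{ab}\langle\psi_+|A_a\otimes B_b|\psi_+\rangle$. *)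

theory Defs
  imports Complex_Main
begin

text \<open>Single-qubit operators as 2x2 complex matrices indexed by bool
  (False = basis state 0, True = basis state 1): entry (row, column).\<close>
type_synonym qop = "bool \<Rightarrow> bool \<Rightarrow> complex"

definition sigma_x :: qop where
  "sigma_x r c = (if r = c then 0 else 1)"

definition sigma_y :: qop where
  "sigma_y r c = (if r = c then 0 else if r then \<i> else - \<i>)"

definition sigma_z :: qop where
  "sigma_z r c = (if r = c then (if r then -1 else 1) else 0)"

definition bloch_op :: "real \<times> real \<times> real \<Rightarrow> qop" where
  "bloch_op v r c = complex_of_real (fst v) * sigma_x r c
                  + complex_of_real (fst (snd v)) * sigma_y r c
                  + complex_of_real (snd (snd v)) * sigma_z r c"

definition dir :: "real \<Rightarrow> real \<Rightarrow> real \<times> real \<times> real" where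
  "dir al ph = (sin al * cos ph, sin al * sin ph, cos al)"

text \<open>Computational basis of N qubits (sites 1..N): bit strings supported on {1..N}.\<close>
definition basis :: "nat \<Rightarrow> (nat \<Rightarrow> bool) set" where
  "basis N = {b. \<forall>j. b j \<longrightarrow> j \<in> {1..N}}"

text \<open>Matrix entries of the tensor product ops 1 \<otimes> ... \<otimes> ops N.\<close>
definition tensor_op :: "nat \<Rightarrow> (nat \<Rightarrow> qop) \<Rightarrow> (nat \<Rightarrow> bool) \<Rightarrow> (nat \<Rightarrow> bool) \<Rightarrow> complex" where
  "tensor_op N ops r c = (\<Prod>j\<in>{1..N}. ops j (r j) (c j))"

text \<open>GHZ state (|0..0> + |1..1>)/sqrt 2 on N qubits; for N = 2 this is psi_+.\<close>
definition ghz :: "nat \<Rightarrow> (nat \<Rightarrow> bool) \<Rightarrow> complex" where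
  "ghz N b = (if b \<in> basis N \<and> ((\<forall>j\<in>{1..N}. \<not> b j) \<or> (\<forall>j\<in>{1..N}. b j))
              then 1 / complex_of_real (sqrt 2) else 0)"

definition expect :: "nat \<Rightarrow> (nat \<Rightarrow> qop) \<Rightarrow> ((nat \<Rightarrow> bool) \<Rightarrow> complex) \<Rightarrow> complex" where
  "expect N ops psi = (\<Sum>r\<in>basis N. \<Sum>c\<in>basis N. cnj (psi r) * tensor_op N ops r c * psi c)"

text \<open>CHSH expression sum_{a,b} (-1)^{ab} <psi| A_a \<otimes> B_b |psi>, where A a is the
  operator on sites 1..N-1 (given sitewise) and B b acts on site N.\<close>
definition chsh :: "nat \<Rightarrow> (bool \<Rightarrow> nat \<Rightarrow> qop) \<Rightarrow> (bool \<Rightarrow> qop) \<Rightarrow> ((nat \<Rightarrow> bool) \<Rightarrow> complex) \<Rightarrow> complex" where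
  "chsh N A B psi = (\<Sum>a\<in>UNIV. \<Sum>b\<in>UNIV. (if a \<and> b then -1 else 1) *
       expect N (\<lambda>j. if j = N then B b else A a j) psi)"

text \<open>The N-partite CHSH value <I^N_CHSH> for settings X_j = n_j.sigma, X_j' = n_j'.sigma.\<close>
definition chshN :: "nat \<Rightarrow> (nat \<Rightarrow> real) \<Rightarrow> (nat \<Rightarrow> real) \<Rightarrow> (nat \<Rightarrow> real) \<Rightarrow> (nat \<Rightarrow> real) \<Rightarrow> complex" where
  "chshN N al ph al' ph' =
     chsh N (\<lambda>a j. bloch_op (if a then dir (al' j) (ph' j) else dir (al j) (ph j)))
            (\<lambda>b. bloch_op (if b then dir (al' N) (ph' N) else dir (al N) (ph N)))
            (ghz N)"

definition Dval :: "nat \<Rightarrow> (nat \<Rightarrow> real) \<Rightarrow> real" where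
  "Dval N al = (\<Prod>j\<in>{1..N-1}. cos (al j))\<^sup>2 + (\<Prod>j\<in>{1..N-1}. sin (al j))\<^sup>2"

definition ND :: "nat \<Rightarrow> (nat \<Rightarrow> real) \<Rightarrow> (nat \<Rightarrow> real) \<Rightarrow> bool" where
  "ND N al al' \<longleftrightarrow> Dval N al \<noteq> 0 \<and> Dval N al' \<noteq> 0 \<and>
     (odd N \<longrightarrow> sin (al N) \<noteq> 0 \<and> sin (al' N) \<noteq> 0)"

text \<open>Bloch vector of the reduced Alice observable A_0 (resp. A_1 with primed data).\<close>
definition redA :: "nat \<Rightarrow> (nat \<Rightarrow> real) \<Rightarrow> (nat \<Rightarrow> real) \<Rightarrow> real \<times> real \<times> real" where
  "redA N al ph =
     (let eps = 1 / sqrt (Dval N al); beta = (\<Sum>j\<in>{1..N-1}. ph j);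
          S = (\<Prod>j\<in>{1..N-1}. sin (al j)); C = (\<Prod>j\<in>{1..N-1}. cos (al j))
      in (eps * S * cos beta, eps * S * sin beta, eps * C))"

definition redB :: "nat \<Rightarrow> real \<Rightarrow> real \<Rightarrow> real \<times> real \<times> real" where
  "redB N al ph = (if even N then dir al ph else (cos ph, sin ph, 0))"

text \<open>The bipartite CHSH value <I^2_CHSH> in psi_+ for the reduced observables.\<close>
definition chsh2 :: "nat \<Rightarrow> (nat \<Rightarrow> real) \<Rightarrow> (nat \<Rightarrow> real) \<Rightarrow> (nat \<Rightarrow> real) \<Rightarrow> (nat \<Rightarrow> real) \<Rightarrow> complex" where
  "chsh2 N al ph al' ph' =
     chsh 2 (\<lambda>a j. bloch_op (if a then redA N al' ph' else redA N al ph))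
            (\<lambda>b. bloch_op (if b then redB N (al' N) (ph' N) else redB N (al N) (ph N)))
            (ghz 2)"

end

theory Submission
  imports Defs "HOL-Analysis.Euclidean_Space"
begin

text \<open>In the GHZ state every correlation of the product observables is an inner product
  \<open>u_a \<bullet> v_b\<close> of two vectors of \<open>\<real>\<^sup>3\<close> of norm at most 1: \<open>u_a\<close> is built from the products of
  the cosines and sines of Alice's \<open>N - 1\<close> polar angles and the sum of her azimuths, \<open>v_b\<close> is
  Bob's Bloch vector, and the z-components survive only for even \<open>N\<close>. So \<open>\<langle>I\<^sup>N\<rangle>\<close> is a CHSH
  combination of vectors in the unit ball, and
  \<open>u\<^sub>0 \<bullet> (v\<^sub>0 + v\<^sub>1) + u\<^sub>1 \<bullet> (v\<^sub>0 - v\<^sub>1) \<le> \<parallel>v\<^sub>0 + v\<^sub>1\<parallel> + \<parallel>v\<^sub>0 - v\<^sub>1\<parallel> \<le> 2\<surd>2\<close> by the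
  parallelogram law. Saturation forces all four vectors to be unit vectors; this gives
  \<open>D = D' = 1\<close> (so \<open>\<epsilon> = \<epsilon>' = 1\<close>) and, for odd \<open>N\<close>, \<open>sin \<alpha>\<^sub>N = sin \<alpha>\<^sub>N' = 1\<close>, and then the
  reduced observables reproduce the same inner products in \<open>\<psi>\<^sub>+\<close>.\<close>

definition chsh_form :: "'a::real_inner \<Rightarrow> 'a \<Rightarrow> 'a \<Rightarrow> 'a \<Rightarrow> real" where
  "chsh_form u0 u1 v0 v1 = inner u0 v0 + inner u0 v1 + inner u1 v0 - inner u1 v1"

lemma parallelogram_law:
  fixes x y :: "'a::real_inner"
  shows "(norm (x + y))\<^sup>2 + (norm (x - y))\<^sup>2 = 2 * (norm x)\<^sup>2 + 2 * (norm y)\<^sup>2"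
  by (simp add: power2_norm_eq_inner inner_add inner_diff inner_commute)

lemma abs_chsh_form_le:
  "\<bar>chsh_form u0 u1 v0 v1\<bar> \<le> norm u0 * norm (v0 + v1) + norm u1 * norm (v0 - v1)"
proof -
  have "chsh_form u0 u1 v0 v1 = inner u0 (v0 + v1) + inner u1 (v0 - v1)"
    by (simp add: chsh_form_def inner_add_right inner_diff_right)
  then show ?thesis
    using Cauchy_Schwarz_ineq2[of u0 "v0 + v1"] Cauchy_Schwarz_ineq2[of u1 "v0 - v1"] by linarith
qed

lemma tsirelson_bound:
  fixes u0 u1 v0 v1 :: "'a::real_inner"
  assumes "norm u0 \<le> 1" "norm u1 \<le> 1" "norm v0 \<le> 1" "norm v1 \<le> 1"
  shows "\<bar>chsh_form u0 u1 v0 v1\<bar> \<le> 2 * sqrt 2"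
    and "\<bar>chsh_form u0 u1 v0 v1\<bar> = 2 * sqrt 2 \<Longrightarrow>
           norm u0 = 1 \<and> norm u1 = 1 \<and> norm v0 = 1 \<and> norm v1 = 1"
proof -
  define a where "a = norm (v0 + v1)"
  define b where "b = norm (v0 - v1)"
  have v_sq: "(norm v0)\<^sup>2 \<le> 1" "(norm v1)\<^sup>2 \<le> 1"
    using assms(3,4) by (simp_all add: abs_square_le_1)
  have ab: "a\<^sup>2 + b\<^sup>2 = 2 * (norm v0)\<^sup>2 + 2 * (norm v1)\<^sup>2"
    unfolding a_def b_def by (rule parallelogram_law)
  have ab_sq: "(a + b)\<^sup>2 + (a - b)\<^sup>2 = 2 * (a\<^sup>2 + b\<^sup>2)"
    by algebra
  have a0: "a \<ge> 0" "b \<ge> 0" unfolding a_def b_def by simp_all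
  have "norm u0 * a \<le> a" "norm u1 * b \<le> b"
    using mult_right_mono[OF assms(1) a0(1)] mult_right_mono[OF assms(2) a0(2)] by simp_all
  then have le: "\<bar>chsh_form u0 u1 v0 v1\<bar> \<le> a + b"
    using abs_chsh_form_le[of u0 u1 v0 v1] unfolding a_def b_def by linarith
  have eight: "(2 * sqrt 2)\<^sup>2 = (8::real)"
    by (simp add: power_mult_distrib)
  have "(a + b)\<^sup>2 \<le> (2 * sqrt 2)\<^sup>2"
    unfolding eight using ab ab_sq v_sq zero_le_power2[of "a - b"] by (smt (verit))
  then have ab_le: "a + b \<le> 2 * sqrt 2"
    by (rule power2_le_imp_le) simp
  with le show "\<bar>chsh_form u0 u1 v0 v1\<bar> \<le> 2 * sqrt 2" by linarith
  assume sat: "\<bar>chsh_form u0 u1 v0 v1\<bar> = 2 * sqrt 2"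
  then have "(2 * sqrt 2)\<^sup>2 \<le> (a + b)\<^sup>2"
    using le by (intro power_mono) simp_all
  then have "(norm v0)\<^sup>2 = 1" "(norm v1)\<^sup>2 = 1" "(a - b)\<^sup>2 = 0"
    unfolding eight using ab ab_sq v_sq zero_le_power2[of "a - b"] by (smt (verit))+
  then have v_norm: "norm v0 = 1" "norm v1 = 1" and a_b: "a = b"
    using norm_ge_zero[of v0] norm_ge_zero[of v1] by (auto simp: power2_eq_1_iff)
  with ab have "a \<noteq> 0" by auto
  with a0 have a_pos: "0 < a" by simp
  have "norm u0 * a + norm u1 * b \<ge> a + b"
    using abs_chsh_form_le[of u0 u1 v0 v1] sat ab_le unfolding a_def b_def by linarith
  then have "(norm u0 + norm u1) * a \<ge> 2 * a"
    unfolding a_b by (simp add: algebra_simps)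
  then have "norm u0 + norm u1 \<ge> 2"
    using a_pos by simp
  with assms(1,2) v_norm show "norm u0 = 1 \<and> norm u1 = 1 \<and> norm v0 = 1 \<and> norm v1 = 1"
    by simp
qed

definition all_zero :: "nat \<Rightarrow> bool" where
  "all_zero = (\<lambda>_. False)"

definition all_one :: "nat \<Rightarrow> nat \<Rightarrow> bool" where
  "all_one N = (\<lambda>j. j \<in> {1..N})"

lemma finite_basis: "finite (basis N)"
proof -
  have "basis N \<subseteq> (\<lambda>S j. j \<in> S) ` Pow {1..N}"
    unfolding basis_def by (auto intro!: image_eqI[where x = "Collect _"])
  then show ?thesis by (rule finite_subset) simp
qed

lemma ghz_eq: "ghz N b = (if b = all_zero \<or> b = all_one N then 1 / complex_of_real (sqrt 2) else 0)"
proof -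
  have "b \<in> basis N \<and> (\<forall>j\<in>{1..N}. \<not> b j) \<longleftrightarrow> b = all_zero"
    unfolding basis_def all_zero_def fun_eq_iff by blast
  moreover have "b \<in> basis N \<and> (\<forall>j\<in>{1..N}. b j) \<longleftrightarrow> b = all_one N"
    unfolding basis_def all_one_def fun_eq_iff by blast
  ultimately show ?thesis
    unfolding ghz_def by (metis (no_types, lifting))
qed

lemma sum_basis_ghz:
  assumes "N \<ge> 1"
  shows "(\<Sum>c\<in>basis N. ghz N c * f c) = (f all_zero + f (all_one N)) / complex_of_real (sqrt 2)"
proof -
  have "all_zero \<noteq> all_one N"
    using assms unfolding all_zero_def all_one_def fun_eq_iff by auto
  moreover have "all_zero \<in> basis N" "all_one N \<in> basis N"
    unfolding basis_def all_zero_def all_one_def by simp_all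
  ultimately show ?thesis
    by (subst sum.mono_neutral_right[of _ "{all_zero, all_one N}"])
       (auto simp: finite_basis ghz_eq add_divide_distrib)
qed

lemma tensor_op_all_zero_all_one:
  "tensor_op N ops all_zero all_zero = (\<Prod>j\<in>{1..N}. ops j False False)"
  "tensor_op N ops all_zero (all_one N) = (\<Prod>j\<in>{1..N}. ops j False True)"
  "tensor_op N ops (all_one N) all_zero = (\<Prod>j\<in>{1..N}. ops j True False)"
  "tensor_op N ops (all_one N) (all_one N) = (\<Prod>j\<in>{1..N}. ops j True True)"
  unfolding tensor_op_def all_zero_def all_one_def by (auto intro!: prod.cong)

lemma expect_ghz:
  assumes "N \<ge> 1"
  shows "expect N ops (ghz N) =
    ((\<Prod>j\<in>{1..N}. ops j False False) + (\<Prod>j\<in>{1..N}. ops j False True)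
   + (\<Prod>j\<in>{1..N}. ops j True False) + (\<Prod>j\<in>{1..N}. ops j True True)) / 2"
proof -
  have "cnj (ghz N b) = ghz N b" for b
    by (simp add: ghz_eq)
  then have "expect N ops (ghz N) =
      (\<Sum>r\<in>basis N. ghz N r * (\<Sum>c\<in>basis N. ghz N c * tensor_op N ops r c))"
    unfolding expect_def by (simp add: sum_distrib_left mult_ac)
  also have "\<dots> = (tensor_op N ops all_zero all_zero + tensor_op N ops all_zero (all_one N)
      + tensor_op N ops (all_one N) all_zero + tensor_op N ops (all_one N) (all_one N))
      / (complex_of_real (sqrt 2) * complex_of_real (sqrt 2))"
    unfolding sum_basis_ghz[OF assms] by (simp add: add_divide_distrib)
  also have "complex_of_real (sqrt 2) * complex_of_real (sqrt 2) = 2"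
    by (simp flip: of_real_mult)
  finally show ?thesis
    unfolding tensor_op_all_zero_all_one .
qed

lemma bloch_op_entries:
  "bloch_op v False False = complex_of_real (snd (snd v))"
  "bloch_op v True True = - complex_of_real (snd (snd v))"
  "bloch_op v False True = complex_of_real (fst v) - \<i> * complex_of_real (fst (snd v))"
  "bloch_op v True False = complex_of_real (fst v) + \<i> * complex_of_real (fst (snd v))"
  by (simp_all add: bloch_op_def sigma_x_def sigma_y_def sigma_z_def)

lemma bloch_op_dir_entries:
  "bloch_op (dir a p) False False = complex_of_real (cos a)"
  "bloch_op (dir a p) True True = - complex_of_real (cos a)"
  "bloch_op (dir a p) False True = complex_of_real (sin a) * cis (- p)"
  "bloch_op (dir a p) True False = complex_of_real (sin a) * cis p"
  by (simp_all add: bloch_op_entries dir_def complex_eq_iff)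

lemma prod_cis: "finite A \<Longrightarrow> (\<Prod>j\<in>A. cis (f j)) = cis (sum f A)"
  by (induction A rule: finite_induct) (auto simp: cis_mult)

lemma expect_ghz_dir:
  assumes "N \<ge> 1"
  shows "expect N (\<lambda>j. bloch_op (dir (al j) (ph j))) (ghz N) =
    complex_of_real ((if even N then (\<Prod>j\<in>{1..N}. cos (al j)) else 0)
       + (\<Prod>j\<in>{1..N}. sin (al j)) * cos (\<Sum>j\<in>{1..N}. ph j))"
  unfolding expect_ghz[OF assms] bloch_op_dir_entries prod.distrib prod_cis[OF finite_atLeastAtMost]
    prod_uminus sum_negf
  by (cases "even N") (simp_all add: complex_eq_iff)

text \<open>Up to the factor \<open>\<epsilon>\<close>, this is the paper's reduced Bloch vector \<open>n\<^sub>0\<close> with the sign of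
  its y-component flipped (and its z-component dropped for odd \<open>N\<close>).\<close>
definition alice_vec :: "nat \<Rightarrow> (nat \<Rightarrow> real) \<Rightarrow> (nat \<Rightarrow> real) \<Rightarrow> real \<times> real \<times> real" where
  "alice_vec N al ph =
     (let S = (\<Prod>j\<in>{1..N-1}. sin (al j)); C = (\<Prod>j\<in>{1..N-1}. cos (al j));
          beta = (\<Sum>j\<in>{1..N-1}. ph j)
      in (S * cos beta, - S * sin beta, if even N then C else 0))"

definition bob_vec :: "nat \<Rightarrow> real \<Rightarrow> real \<Rightarrow> real \<times> real \<times> real" where
  "bob_vec N a p = (sin a * cos p, sin a * sin p, if even N then cos a else 0)"

lemma expect_ghz_last_site:
  assumes "N \<ge> 2"
  shows "expect N (\<lambda>j. if j = N then bloch_op (dir x y) else bloch_op (dir (al j) (ph j))) (ghz N)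
     = complex_of_real (inner (alice_vec N al ph) (bob_vec N x y))"
proof -
  obtain m where m: "N = Suc m" "m \<ge> 1" using assms by (cases N) auto
  have ops: "(\<lambda>j. if j = N then bloch_op (dir x y) else bloch_op (dir (al j) (ph j)))
      = (\<lambda>j. bloch_op (dir ((al(N := x)) j) ((ph(N := y)) j)))"
    by (auto simp: fun_eq_iff)
  show ?thesis
    unfolding ops expect_ghz_dir[OF order.trans[OF one_le_numeral assms]]
    unfolding m alice_vec_def bob_vec_def Let_def
    by (simp add: prod.nat_ivl_Suc' sum.nat_ivl_Suc' cos_add algebra_simps)
qed

lemma chshN_eq_chsh_form:
  assumes "N \<ge> 2"
  shows "chshN N al ph al' ph' = complex_of_real (chsh_form
     (alice_vec N al ph) (alice_vec N al' ph') (bob_vec N (al N) (ph N)) (bob_vec N (al' N) (ph' N)))"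
  unfolding chshN_def chsh_def chsh_form_def UNIV_bool
  using expect_ghz_last_site[OF assms] by (simp cong: if_cong)

definition reflect_y :: "real \<times> real \<times> real \<Rightarrow> real \<times> real \<times> real" where
  "reflect_y v = (fst v, - fst (snd v), snd (snd v))"

lemma expect_psi_plus:
  "expect 2 (\<lambda>j. if j = 2 then bloch_op w else bloch_op v) (ghz 2) =
     complex_of_real (inner (reflect_y v) w)"
proof -
  have "{1..2::nat} = {1, 2}" by auto
  then show ?thesis
    unfolding expect_ghz[OF one_le_numeral] reflect_y_def
    by (simp add: bloch_op_entries complex_eq_iff inner_prod_def)
qed

lemma chsh2_eq_chsh_form:
  "chsh2 N al ph al' ph' = complex_of_real (chsh_form
     (reflect_y (redA N al ph)) (reflect_y (redA N al' ph'))
     (redB N (al N) (ph N)) (redB N (al' N) (ph' N)))"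
  unfolding chsh2_def chsh_def chsh_form_def UNIV_bool
  using expect_psi_plus by (simp cong: if_cong)

lemma prod_cos_sq_add_prod_sin_sq_le:
  fixes al :: "'a \<Rightarrow> real"
  assumes "finite A" "A \<noteq> {}"
  shows "(\<Prod>j\<in>A. cos (al j))\<^sup>2 + (\<Prod>j\<in>A. sin (al j))\<^sup>2 \<le> 1"
proof -
  obtain a where a: "a \<in> A" using assms(2) by blast
  define C where "C = (\<Prod>j\<in>A - {a}. cos (al j))"
  define S where "S = (\<Prod>j\<in>A - {a}. sin (al j))"
  have "\<bar>C\<bar> \<le> 1" "\<bar>S\<bar> \<le> 1"
    unfolding C_def S_def abs_prod by (simp_all add: prod_le_1)
  then have "C\<^sup>2 \<le> 1" "S\<^sup>2 \<le> 1"
    by (simp_all add: abs_square_le_1)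
  then have "(cos (al a))\<^sup>2 * C\<^sup>2 + (sin (al a))\<^sup>2 * S\<^sup>2 \<le> (cos (al a))\<^sup>2 + (sin (al a))\<^sup>2"
    by (intro add_mono mult_left_le) simp_all
  then show ?thesis
    using prod.remove[OF assms(1) a, of "\<lambda>j. cos (al j)"] prod.remove[OF assms(1) a, of "\<lambda>j. sin (al j)"]
    unfolding C_def[symmetric] S_def[symmetric] by (simp add: power_mult_distrib)
qed

lemma norm_triple_sq: "(norm (x, y, z))\<^sup>2 = x\<^sup>2 + y\<^sup>2 + (z :: real)\<^sup>2"
  unfolding power2_norm_eq_inner by (simp add: power2_eq_square)

lemma polar_sq: "(r * cos t)\<^sup>2 + (r * sin t)\<^sup>2 = (r :: real)\<^sup>2"
  by (simp add: power_mult_distrib flip: distrib_left)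

lemma norm_alice_vec_sq:
  "(norm (alice_vec N al ph))\<^sup>2 =
     (\<Prod>j\<in>{1..N-1}. sin (al j))\<^sup>2 + (if even N then (\<Prod>j\<in>{1..N-1}. cos (al j))\<^sup>2 else 0)"
  using polar_sq[of "\<Prod>j\<in>{1..N-1}. sin (al j)" "\<Sum>j\<in>{1..N-1}. ph j"]
  unfolding alice_vec_def Let_def norm_triple_sq by simp

lemma norm_bob_vec_sq:
  "(norm (bob_vec N x y))\<^sup>2 = (sin x)\<^sup>2 + (if even N then (cos x)\<^sup>2 else 0)"
  using polar_sq[of "sin x" y] unfolding bob_vec_def norm_triple_sq by (simp add: mult.commute)

lemma norm_le_1_iff_sq: "norm v \<le> 1 \<longleftrightarrow> (norm v)\<^sup>2 \<le> 1"
  by (simp add: abs_square_le_1)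

lemma norm_alice_vec_le:
  assumes "N \<ge> 2"
  shows "norm (alice_vec N al ph) \<le> 1"
proof -
  have "(norm (alice_vec N al ph))\<^sup>2
      \<le> (\<Prod>j\<in>{1..N-1}. cos (al j))\<^sup>2 + (\<Prod>j\<in>{1..N-1}. sin (al j))\<^sup>2"
    unfolding norm_alice_vec_sq by simp
  also have "\<dots> \<le> 1"
    using assms by (intro prod_cos_sq_add_prod_sin_sq_le) auto
  finally show ?thesis
    unfolding norm_le_1_iff_sq .
qed

lemma norm_bob_vec_le: "norm (bob_vec N x y) \<le> 1"
  unfolding norm_le_1_iff_sq norm_bob_vec_sq by (simp add: abs_square_le_1)

lemma Dval_eq_1_if_norm_alice_vec:
  assumes "N \<ge> 2" and "norm (alice_vec N al ph) = 1"
  shows "Dval N al = 1"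
proof -
  define C where "C = (\<Prod>j\<in>{1..N-1}. cos (al j))"
  define S where "S = (\<Prod>j\<in>{1..N-1}. sin (al j))"
  have "S\<^sup>2 + (if even N then C\<^sup>2 else 0) = 1"
    using assms(2) norm_alice_vec_sq[of N al ph] unfolding C_def S_def by simp
  moreover have "C\<^sup>2 + S\<^sup>2 \<le> 1"
    unfolding C_def S_def using assms(1) by (intro prod_cos_sq_add_prod_sin_sq_le) auto
  moreover have "0 \<le> C\<^sup>2" by simp
  ultimately show ?thesis
    unfolding Dval_def C_def[symmetric] S_def[symmetric] by (cases "even N") auto
qed

lemma sin_eq_1_if_norm_bob_vec:
  assumes "odd N" "norm (bob_vec N x y) = 1" "0 \<le> sin x"
  shows "sin x = 1"
proof -
  have "(sin x)\<^sup>2 = 1"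
    using assms(1,2) norm_bob_vec_sq[of N x y] by simp
  with assms(3) show ?thesis
    by (auto simp: power2_eq_1_iff)
qed

lemma inner_reduced_eq:
  assumes "Dval N al = 1" and "odd N \<longrightarrow> sin x = 1"
  shows "inner (reflect_y (redA N al ph)) (redB N x y) = inner (alice_vec N al ph) (bob_vec N x y)"
  using assms unfolding redA_def redB_def reflect_y_def alice_vec_def bob_vec_def dir_def Let_def
  by (cases "even N") (simp_all add: algebra_simps)

lemma inner_reduced_eq_if_unit:
  assumes "N \<ge> 2" "norm (alice_vec N al ph) = 1" "norm (bob_vec N x y) = 1" "x \<in> {0..pi}"
  shows "inner (reflect_y (redA N al ph)) (redB N x y) = inner (alice_vec N al ph) (bob_vec N x y)"
proof (rule inner_reduced_eq)
  show "Dval N al = 1"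
    using assms(1,2) by (rule Dval_eq_1_if_norm_alice_vec)
  show "odd N \<longrightarrow> sin x = 1"
    using assms(3,4) sin_eq_1_if_norm_bob_vec sin_ge_zero by auto
qed

theorem mainTheorem2:
  fixes N :: nat and al ph al' ph' :: "nat \<Rightarrow> real"
  assumes "N \<ge> 3"
    and "\<forall>j\<in>{1..N}. al j \<in> {0..pi} \<and> al' j \<in> {0..pi}"
  shows "cmod (chshN N al ph al' ph') \<le> 2 * sqrt 2 \<and>
         (ND N al al' \<and>
          (chshN N al ph al' ph' = complex_of_real (2 * sqrt 2) \<or>
           chshN N al ph al' ph' = complex_of_real (- 2 * sqrt 2)) \<longrightarrow>
          chsh2 N al ph al' ph' = chshN N al ph al' ph')"
proof -
  have N: "N \<ge> 2" using assms(1) by simp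
  note chshN = chshN_eq_chsh_form[OF N, of al ph al' ph']
  note norms = norm_alice_vec_le[OF N, of al ph] norm_alice_vec_le[OF N, of al' ph']
    norm_bob_vec_le[of N "al N" "ph N"] norm_bob_vec_le[of N "al' N" "ph' N"]
  have "cmod (chshN N al ph al' ph') \<le> 2 * sqrt 2"
    unfolding chshN norm_of_real by (rule tsirelson_bound(1)[OF norms])
  moreover have "chsh2 N al ph al' ph' = chshN N al ph al' ph'"
    if "chshN N al ph al' ph' = complex_of_real (2 * sqrt 2) \<or>
        chshN N al ph al' ph' = complex_of_real (- 2 * sqrt 2)"
  proof -
    have "\<bar>chsh_form (alice_vec N al ph) (alice_vec N al' ph')
            (bob_vec N (al N) (ph N)) (bob_vec N (al' N) (ph' N))\<bar> = 2 * sqrt 2"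
      using that unfolding chshN of_real_eq_iff by auto
    then have unit: "norm (alice_vec N al ph) = 1" "norm (alice_vec N al' ph') = 1"
      "norm (bob_vec N (al N) (ph N)) = 1" "norm (bob_vec N (al' N) (ph' N)) = 1"
      using tsirelson_bound(2)[OF norms] by auto
    have "al N \<in> {0..pi}" "al' N \<in> {0..pi}"
      using assms(2) N by auto
    then show ?thesis
      unfolding chsh2_eq_chsh_form chshN chsh_form_def
      by (simp add: inner_reduced_eq_if_unit[OF N] unit)
  qed
  ultimately show ?thesis by blast
qed

end
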